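(* For every $n\ge 3$, the local metric dimension of the convex polytope graph $S_n$ satisfies $lmd(S_n)=2$ if $n$ is odd and $lmd(S_n)=3$ if $n$ is even.
   Context: For $n\ge 3$, $S_n$ is the graph with vertex set $\{a_i,b_i,c_i,d_i : 1\le i\le n\}$ and edge set $\{a_ia_{i+1}, b_ib_{i+1}, c_ic_{i+1}, d_id_{i+1}, a_{i+1}b_i, a_ib_i, b_ic_i, c_id_i : 1\le i\le n\}$, indices taken modulo $n$. $d(u,v)$ is the graph distance. A vertex $w$ resolves $u,v$ if $d(u,w)\neq d(v,w)$. A set $W$ of vertices is a local resolving set if every two adjacent vertices are resolved by some element of $W$; $lmd(G)$ is the minimum cardinality of a local resolving set of $G$. *)

theory Defs
  imports Main
begin

definition is_walk :: "'v set \<Rightarrow> ('v \<Rightarrow> 'v \<Rightarrow> bool) \<Rightarrow> 'v list \<Rightarrow> bool" where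
  "is_walk V E p \<longleftrightarrow> p \<noteq> [] \<and> set p \<subseteq> V \<and>
     (\<forall>i. Suc i < length p \<longrightarrow> E (p ! i) (p ! Suc i))"

definition gdist :: "'v set \<Rightarrow> ('v \<Rightarrow> 'v \<Rightarrow> bool) \<Rightarrow> 'v \<Rightarrow> 'v \<Rightarrow> nat" where
  "gdist V E u v = (LEAST k. \<exists>p. is_walk V E p \<and> hd p = u \<and> last p = v \<and> length p = Suc k)"

definition resolves :: "'v set \<Rightarrow> ('v \<Rightarrow> 'v \<Rightarrow> bool) \<Rightarrow> 'v \<Rightarrow> 'v \<Rightarrow> 'v \<Rightarrow> bool" where
  "resolves V E w u v \<longleftrightarrow> gdist V E u w \<noteq> gdist V E v w"

definition local_resolving_set :: "'v set \<Rightarrow> ('v \<Rightarrow> 'v \<Rightarrow> bool) \<Rightarrow> 'v set \<Rightarrow> bool" where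
  "local_resolving_set V E W \<longleftrightarrow> W \<subseteq> V \<and>
     (\<forall>u\<in>V. \<forall>v\<in>V. E u v \<longrightarrow> (\<exists>w\<in>W. resolves V E w u v))"

definition lmd :: "'v set \<Rightarrow> ('v \<Rightarrow> 'v \<Rightarrow> bool) \<Rightarrow> nat" where
  "lmd V E = (LEAST k. \<exists>W. local_resolving_set V E W \<and> finite W \<and> card W = k)"

text \<open>Vertices a_i, b_i, c_i, d_i; indices 1..n are represented as 0..n-1 (mod n).\<close>
datatype vtx = A nat | B nat | C nat | D nat

definition S_vertices :: "nat \<Rightarrow> vtx set" where
  "S_vertices n = (\<Union>i\<in>{..<n}. {A i, B i, C i, D i})"

definition S_gen :: "nat \<Rightarrow> vtx \<Rightarrow> vtx \<Rightarrow> bool" where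
  "S_gen n x y \<longleftrightarrow> (\<exists>i<n.
      (x = A i \<and> y = A (Suc i mod n)) \<or>
      (x = B i \<and> y = B (Suc i mod n)) \<or>
      (x = C i \<and> y = C (Suc i mod n)) \<or>
      (x = D i \<and> y = D (Suc i mod n)) \<or>
      (x = A (Suc i mod n) \<and> y = B i) \<or>
      (x = A i \<and> y = B i) \<or>
      (x = B i \<and> y = C i) \<or>
      (x = C i \<and> y = D i))"

definition S_adj :: "nat \<Rightarrow> vtx \<Rightarrow> vtx \<Rightarrow> bool" where
  "S_adj n x y \<longleftrightarrow> S_gen n x y \<or> S_gen n y x"

end

theory Submission
  imports Defs
begin

text \<open>Index the vertices from 0, as in the encoding, and place them on the rim, the cycle
  a_0 b_0 a_1 b_1 ... of length 2n: a_i sits at position 2i, and b_i, c_i, d_i sit above position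
  2i + 1 at levels 0, 1, 2. Every edge either changes the level by one or moves by 1 or 2 along the
  rim at a fixed level, and d(u, v) is the ceiling of half the cyclic distance of the positions plus
  the difference of the levels.

  Hence a vertical edge is resolved by every vertex, while an edge joining positions q and q + k
  (k = 1, 2) is resolved by w unless the offset of q from w, taken mod 2n, is blind for k: for k = 1
  the blind offsets are the odd ones below n and the even ones from n on, for k = 2 they are n - 1
  and 2n - 1. For odd n no offset r has r and r - 1 both blind, so a_0, b_0 (positions 0, 1) form a
  local resolving set; for even n the same holds for r, r - 1, r - 2 and a_0, b_0, a_1. Conversely
  one vertex is always blind at offset n - 1 for k = 2, and for even n any two vertices share a
  blind offset.\<close>

section \<open>Distances from potential functions\<close>

lemma is_walk_snoc:
  assumes "q \<noteq> []"
  shows "is_walk V E (q @ [x]) \<longleftrightarrow> is_walk V E q \<and> x \<in> V \<and> E (last q) x"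
proof -
  obtain j where j: "length q = Suc j" using assms by (cases q) auto
  have last_q: "last q = q ! j" using assms j by (simp add: last_conv_nth)
  have steps: "(\<forall>i. Suc i < length (q @ [x]) \<longrightarrow> E ((q @ [x]) ! i) ((q @ [x]) ! Suc i)) \<longleftrightarrow>
      (\<forall>i. Suc i < length q \<longrightarrow> E (q ! i) (q ! Suc i)) \<and> E (last q) x"
  proof
    assume h: "\<forall>i. Suc i < length (q @ [x]) \<longrightarrow> E ((q @ [x]) ! i) ((q @ [x]) ! Suc i)"
    have "E (q ! i) (q ! Suc i)" if "Suc i < length q" for i
      using h[rule_format, of i] that by (simp add: nth_append)
    moreover have "E (last q) x" using h[rule_format, of j] j last_q by (simp add: nth_append)
    ultimately show "(\<forall>i. Suc i < length q \<longrightarrow> E (q ! i) (q ! Suc i)) \<and> E (last q) x" by blast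
  next
    assume h: "(\<forall>i. Suc i < length q \<longrightarrow> E (q ! i) (q ! Suc i)) \<and> E (last q) x"
    show "\<forall>i. Suc i < length (q @ [x]) \<longrightarrow> E ((q @ [x]) ! i) ((q @ [x]) ! Suc i)"
    proof (intro allI impI)
      fix i assume "Suc i < length (q @ [x])"
      then consider "Suc i < length q" | "i = j" using j by fastforce
      then show "E ((q @ [x]) ! i) ((q @ [x]) ! Suc i)"
        by cases (use h j last_q in \<open>simp_all add: nth_append\<close>)
    qed
  qed
  show ?thesis unfolding is_walk_def steps by (simp add: assms conj_ac)
qed

lemma potential_le_walk_length:
  fixes \<phi> :: "'v \<Rightarrow> nat"
  assumes lip: "\<And>x y. x \<in> V \<Longrightarrow> y \<in> V \<Longrightarrow> E x y \<Longrightarrow> \<phi> y \<le> \<phi> x + 1"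
    and zero: "\<phi> u = 0"
  shows "is_walk V E p \<Longrightarrow> hd p = u \<Longrightarrow> \<phi> (last p) \<le> length p - 1"
proof (induction p rule: rev_induct)
  case Nil
  then show ?case by (simp add: is_walk_def)
next
  case (snoc x q)
  show ?case
  proof (cases "q = []")
    case True
    then show ?thesis using snoc.prems zero by simp
  next
    case False
    then have wq: "is_walk V E q" and xV: "x \<in> V" and Eq: "E (last q) x"
      using snoc.prems(1) by (simp_all add: is_walk_snoc)
    have "last q \<in> V" using wq False unfolding is_walk_def by auto
    then have "\<phi> x \<le> \<phi> (last q) + 1" using lip xV Eq by blast
    moreover have "\<phi> (last q) \<le> length q - 1" using snoc.IH wq snoc.prems(2) False by simp
    moreover have "length q > 0" using False by simp
    ultimately show ?thesis by (simp del: length_greater_0_conv)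
  qed
qed

lemma walk_of_potential:
  fixes \<phi> :: "'v \<Rightarrow> nat"
  assumes uV: "u \<in> V"
    and zero_only_at: "\<And>x. x \<in> V \<Longrightarrow> \<phi> x = 0 \<Longrightarrow> x = u"
    and descent: "\<And>x. x \<in> V \<Longrightarrow> \<phi> x > 0 \<Longrightarrow> \<exists>y\<in>V. E y x \<and> \<phi> y + 1 = \<phi> x"
  shows "x \<in> V \<Longrightarrow> \<exists>p. is_walk V E p \<and> hd p = u \<and> last p = x \<and> length p = Suc (\<phi> x)"
proof (induction "\<phi> x" arbitrary: x)
  case 0
  then have "x = u" using zero_only_at by auto
  then show ?case using uV \<open>0 = \<phi> x\<close> by (intro exI[of _ "[u]"]) (simp add: is_walk_def)
next
  case (Suc k)
  have "\<phi> x > 0" using Suc.hyps(2) by simp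
  then obtain y where yV: "y \<in> V" and Eyx: "E y x" and "\<phi> y + 1 = \<phi> x"
    using descent Suc.prems by blast
  then have "k = \<phi> y" using Suc.hyps(2) by simp
  then obtain p where p: "is_walk V E p" "hd p = u" "last p = y" "length p = Suc k"
    using Suc.hyps(1) yV by blast
  have "p \<noteq> []" using p(1) unfolding is_walk_def by simp
  then have "is_walk V E (p @ [x])" using p(1,3) Suc.prems Eyx by (simp add: is_walk_snoc)
  moreover have "hd (p @ [x]) = u" "length (p @ [x]) = Suc (\<phi> x)"
    using p(2,4) \<open>p \<noteq> []\<close> Suc.hyps(2) by simp_all
  ultimately show ?case by (intro exI[of _ "p @ [x]"]) simp
qed

lemma gdist_eq_potential:
  fixes \<phi> :: "'v \<Rightarrow> nat"
  assumes "u \<in> V" "v \<in> V"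
    and "\<And>x y. x \<in> V \<Longrightarrow> y \<in> V \<Longrightarrow> E x y \<Longrightarrow> \<phi> y \<le> \<phi> x + 1"
    and "\<phi> u = 0"
    and "\<And>x. x \<in> V \<Longrightarrow> \<phi> x = 0 \<Longrightarrow> x = u"
    and "\<And>x. x \<in> V \<Longrightarrow> \<phi> x > 0 \<Longrightarrow> \<exists>y\<in>V. E y x \<and> \<phi> y + 1 = \<phi> x"
  shows "gdist V E u v = \<phi> v"
  unfolding gdist_def
proof (rule Least_equality)
  show "\<exists>p. is_walk V E p \<and> hd p = u \<and> last p = v \<and> length p = Suc (\<phi> v)"
    using walk_of_potential[OF assms(1,5,6,2)] .
next
  fix k assume "\<exists>p. is_walk V E p \<and> hd p = u \<and> last p = v \<and> length p = Suc k"
  then obtain p where p: "is_walk V E p" "hd p = u" "last p = v" "length p = Suc k" by blast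
  then show "\<phi> v \<le> k" using potential_le_walk_length[of V E \<phi> u, OF assms(3,4) p(1,2)] by simp
qed

lemma lmd_eqI:
  assumes "local_resolving_set V E W" "finite W" "card W = k"
    and "\<And>W. local_resolving_set V E W \<Longrightarrow> finite W \<Longrightarrow> k \<le> card W"
  shows "lmd V E = k"
  unfolding lmd_def by (rule Least_equality) (use assms in auto)

section \<open>Arithmetic on a cycle\<close>

lemma mod_wrap:
  fixes x N :: int
  assumes "- N \<le> x" "x < 2 * N"
  shows "x mod N = (if N \<le> x then x - N else if x < 0 then x + N else x)"
proof -
  consider "N \<le> x" | "0 \<le> x" "x < N" | "x < 0" by linarith
  then show ?thesis
  proof cases
    case 1
    have "(x - N) mod N = x - N" using 1 assms by (intro mod_pos_pos_trivial) auto
    then show ?thesis using 1 by (simp add: minus_mod_self2)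
  next
    case 2
    then show ?thesis by simp
  next
    case 3
    have "(x + N) mod N = x + N" using 3 assms by (intro mod_pos_pos_trivial) auto
    then show ?thesis using 3 assms by simp
  qed
qed

text \<open>The distance on a cycle of length N between two points with difference d; only meaningful
  for |d| < N.\<close>
definition cyc_dist :: "int \<Rightarrow> int \<Rightarrow> int" where
  "cyc_dist N d = min \<bar>d\<bar> (N - \<bar>d\<bar>)"

lemma cyc_dist_nonneg: "\<bar>d\<bar> < N \<Longrightarrow> 0 \<le> cyc_dist N d"
  unfolding cyc_dist_def by simp

lemma cyc_dist_eq_0_iff: "\<bar>d\<bar> < N \<Longrightarrow> cyc_dist N d = 0 \<longleftrightarrow> d = 0"
  unfolding cyc_dist_def min_def by auto

lemma cyc_dist_eq_if_nonneg:
  "0 \<le> d \<Longrightarrow> d < 2 * N \<Longrightarrow> cyc_dist (2 * N) d = (if d \<le> N then d else 2 * N - d)"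
  unfolding cyc_dist_def by auto

lemma cyc_dist_le_shift:
  assumes "\<bar>d\<bar> < N" "\<bar>d'\<bar> < N"
    and "\<bar>d' - d\<bar> \<le> 2 \<or> \<bar>d' - d - N\<bar> \<le> 2 \<or> \<bar>d' - d + N\<bar> \<le> 2"
  shows "cyc_dist N d' \<le> cyc_dist N d + 2"
  using assms unfolding cyc_dist_def min_def
  by (simp add: abs_if split: if_splits; elim disjE; linarith)

lemma cyc_dist_le_mod_shift:
  assumes "0 \<le> p" "p < N" "0 \<le> a" "a < N" "0 \<le> b" "b < N" "2 \<le> N" "k \<in> {1, 2}"
    and shift: "b = (a + k) mod N \<or> a = (b + k) mod N"
  shows "cyc_dist N (p - b) \<le> cyc_dist N (p - a) + 2"
proof -
  have "0 \<le> k" "k \<le> 2" using assms(8) by auto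
  then have "(a + k) mod N = (if N \<le> a + k then a + k - N else a + k)"
    and "(b + k) mod N = (if N \<le> b + k then b + k - N else b + k)"
    using assms(3-7) by (simp_all add: mod_wrap)
  then have "\<bar>b - a\<bar> \<le> 2 \<or> \<bar>b - a - N\<bar> \<le> 2 \<or> \<bar>b - a + N\<bar> \<le> 2"
    using shift assms(8) by (auto split: if_splits)
  then show ?thesis using assms(1-6) by (intro cyc_dist_le_shift) auto
qed

lemma cyc_dist_toward:
  assumes "0 \<le> p" "p < N" "0 \<le> q" "q < N" "2 \<le> cyc_dist N (p - q)"
  shows "cyc_dist N (p - (q + 2) mod N) = cyc_dist N (p - q) - 2 \<or>
    cyc_dist N (p - (q - 2) mod N) = cyc_dist N (p - q) - 2"
proof -
  have gap: "2 \<le> \<bar>p - q\<bar>" "2 \<le> N - \<bar>p - q\<bar>"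
    using assms(5) unfolding cyc_dist_def by auto
  consider "2 * \<bar>p - q\<bar> \<le> N" "q \<le> p" | "2 * \<bar>p - q\<bar> \<le> N" "p < q"
    | "2 * \<bar>p - q\<bar> > N" "q \<le> p" "2 \<le> q" | "2 * \<bar>p - q\<bar> > N" "q \<le> p" "q < 2"
    | "2 * \<bar>p - q\<bar> > N" "p < q" "q + 2 < N" | "2 * \<bar>p - q\<bar> > N" "p < q" "N \<le> q + 2"
    by linarith
  then show ?thesis
  proof cases
    case 1
    then have "(q + 2) mod N = q + 2" using assms gap by simp
    then show ?thesis using 1 gap unfolding cyc_dist_def by (intro disjI1) simp
  next
    case 2
    then have "(q - 2) mod N = q - 2" using assms gap by simp
    then show ?thesis using 2 gap unfolding cyc_dist_def by (intro disjI2) simp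
  next
    case 3
    then have "(q - 2) mod N = q - 2" using assms gap by simp
    then show ?thesis using 3 gap unfolding cyc_dist_def by (intro disjI2) simp
  next
    case 4
    then have "(q - 2) mod N = q - 2 + N" using assms gap by (simp add: mod_wrap)
    then show ?thesis using 4 assms gap unfolding cyc_dist_def by (intro disjI2) simp
  next
    case 5
    then have "(q + 2) mod N = q + 2" using assms gap by simp
    then show ?thesis using 5 gap unfolding cyc_dist_def by (intro disjI1) simp
  next
    case 6
    then have "(q + 2) mod N = q + 2 - N" using assms gap by (simp add: mod_wrap)
    then show ?thesis using 6 assms gap unfolding cyc_dist_def by (intro disjI1) simp
  qed
qed

lemma cyc_dist_eq_1D:
  assumes "0 \<le> p" "p < N" "0 \<le> q" "q < N" "cyc_dist N (p - q) = 1"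
  shows "p = (q + 1) mod N \<or> p = (q - 1) mod N"
  using assms unfolding cyc_dist_def min_def
  by (simp add: mod_wrap abs_if split: if_splits; linarith)

lemma cyc_dist_even_ne_1: "cyc_dist (2 * N) (2 * k) \<noteq> 1"
  unfolding cyc_dist_def min_def by (simp add: abs_if split: if_splits; presburger)

lemma ceil_half_cyc_dist_succ_iff:
  fixes r m :: int
  assumes "0 \<le> r" "r < 2 * m"
  shows "(cyc_dist (2 * m) r + 1) div 2 = (cyc_dist (2 * m) ((r + 1) mod (2 * m)) + 1) div 2 \<longleftrightarrow>
    (odd r \<and> r < m) \<or> (even r \<and> m \<le> r)"
proof -
  consider "r + 1 \<le> m" | "m \<le> r" "r + 1 < 2 * m" | "r + 1 = 2 * m"
    using assms by linarith
  then show ?thesis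
  proof cases
    case 1
    then have "(r + 1) mod (2 * m) = r + 1" using assms by simp
    then show ?thesis using 1 assms
      by (simp add: cyc_dist_eq_if_nonneg) presburger
  next
    case 2
    then have "(r + 1) mod (2 * m) = r + 1" using assms by simp
    then show ?thesis using 2 assms
      by (simp add: cyc_dist_eq_if_nonneg) presburger
  next
    case 3
    then show ?thesis using assms
      by (simp add: cyc_dist_eq_if_nonneg) presburger
  qed
qed

lemma ceil_half_cyc_dist_add_2_iff:
  fixes r m :: int
  assumes "0 \<le> r" "r < 2 * m" "2 \<le> m"
  shows "(cyc_dist (2 * m) r + 1) div 2 = (cyc_dist (2 * m) ((r + 2) mod (2 * m)) + 1) div 2 \<longleftrightarrow>
    r = m - 1 \<or> r = 2 * m - 1"
proof -
  consider "r + 2 \<le> m" | "m \<le> r" "r + 2 < 2 * m" | "r + 1 = m"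
    | "r + 2 = 2 * m" | "r + 1 = 2 * m"
    using assms by linarith
  then show ?thesis
  proof cases
    case 1
    then have "(r + 2) mod (2 * m) = r + 2" using assms by simp
    then show ?thesis using 1 assms
      by (simp add: cyc_dist_eq_if_nonneg)
  next
    case 2
    then have "(r + 2) mod (2 * m) = r + 2" using assms by simp
    then show ?thesis using 2 assms
      by (simp add: cyc_dist_eq_if_nonneg) presburger
  next
    case 3
    then have "(r + 2) mod (2 * m) = r + 2" using assms by simp
    then show ?thesis using 3 assms
      by (simp add: cyc_dist_eq_if_nonneg)
  next
    case 4
    then show ?thesis using assms
      by (simp add: cyc_dist_eq_if_nonneg) presburger
  next
    case 5
    then have "(r + 2) mod (2 * m) = 1" using assms by (simp add: mod_wrap)
    then show ?thesis using 5 assms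
      by (simp add: cyc_dist_eq_if_nonneg)
  qed
qed

fun pos :: "vtx \<Rightarrow> int" where
  "pos (A i) = 2 * int i"
| "pos (B i) = 2 * int i + 1"
| "pos (C i) = 2 * int i + 1"
| "pos (D i) = 2 * int i + 1"

fun level :: "vtx \<Rightarrow> int" where
  "level (A i) = 0" | "level (B i) = 0" | "level (C i) = 1" | "level (D i) = 2"

fun index :: "vtx \<Rightarrow> nat" where
  "index (A i) = i" | "index (B i) = i" | "index (C i) = i" | "index (D i) = i"

definition next_idx :: "nat \<Rightarrow> nat \<Rightarrow> nat" where
  "next_idx n i = (if Suc i = n then 0 else Suc i)"

definition prev_idx :: "nat \<Rightarrow> nat \<Rightarrow> nat" where
  "prev_idx n i = (if i = 0 then n - 1 else i - 1)"

lemma Suc_mod_eq_next_idx: "i < n \<Longrightarrow> Suc i mod n = next_idx n i"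
  by (simp add: next_idx_def mod_Suc)

lemma next_idx_less: "i < n \<Longrightarrow> next_idx n i < n"
  by (auto simp: next_idx_def)

lemma prev_idx_less: "i < n \<Longrightarrow> prev_idx n i < n"
  by (auto simp: prev_idx_def)

lemma next_idx_prev_idx: "i < n \<Longrightarrow> next_idx n (prev_idx n i) = i"
  by (auto simp: next_idx_def prev_idx_def)

lemma mem_S_vertices_iff: "x \<in> S_vertices n \<longleftrightarrow> index x < n"
  by (cases x) (auto simp: S_vertices_def)

lemma S_adj_iff: "S_adj n x y \<longleftrightarrow> (\<exists>i<n.
      (x = A i \<and> y = A (next_idx n i)) \<or> (x = B i \<and> y = B (next_idx n i)) \<or>
      (x = C i \<and> y = C (next_idx n i)) \<or> (x = D i \<and> y = D (next_idx n i)) \<or>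
      (x = A (next_idx n i) \<and> y = B i) \<or> (x = A i \<and> y = B i) \<or>
      (x = B i \<and> y = C i) \<or> (x = C i \<and> y = D i) \<or>
      (y = A i \<and> x = A (next_idx n i)) \<or> (y = B i \<and> x = B (next_idx n i)) \<or>
      (y = C i \<and> x = C (next_idx n i)) \<or> (y = D i \<and> x = D (next_idx n i)) \<or>
      (y = A (next_idx n i) \<and> x = B i) \<or> (y = A i \<and> x = B i) \<or>
      (y = B i \<and> x = C i) \<or> (y = C i \<and> x = D i))"
  unfolding S_adj_def S_gen_def by (auto simp: Suc_mod_eq_next_idx)

lemma S_adj_commute: "S_adj n x y \<longleftrightarrow> S_adj n y x"
  unfolding S_adj_def by blast

lemma S_adj_cycles:
  "i < n \<Longrightarrow> S_adj n (A i) (A (next_idx n i)) \<and> S_adj n (B i) (B (next_idx n i)) \<and>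
     S_adj n (C i) (C (next_idx n i)) \<and> S_adj n (D i) (D (next_idx n i))"
  unfolding S_adj_iff by (intro conjI; rule exI[of _ i]; simp)

lemma S_adj_spokes:
  "i < n \<Longrightarrow> S_adj n (A i) (B i) \<and> S_adj n (A (next_idx n i)) (B i) \<and>
     S_adj n (B i) (C i) \<and> S_adj n (C i) (D i)"
  unfolding S_adj_iff by (intro conjI; rule exI[of _ i]; simp)

lemma pos_range: "index x < n \<Longrightarrow> 0 \<le> pos x \<and> pos x < 2 * int n"
  by (cases x) auto

lemma pos_level_inject: "pos x = pos y \<Longrightarrow> level x = level y \<Longrightarrow> x = y"
  by (cases x; cases y) (auto, presburger+)

lemma level_nonneg: "0 \<le> level x"
  by (cases x) auto

lemma level_eq_0_if_even_pos: "even (pos x) \<Longrightarrow> level x = 0"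
  by (cases x) auto

lemma odd_pos_if_level_ne_0: "level x \<noteq> 0 \<Longrightarrow> odd (pos x)"
  by (cases x) auto

lemma double_next_idx:
  "j < n \<Longrightarrow> 0 \<le> c \<Longrightarrow> c \<le> 1 \<Longrightarrow>
     2 * int (next_idx n j) + c = (2 * int j + 2 + c) mod (2 * int n)"
  by (cases "Suc j = n") (auto simp: next_idx_def mod_wrap)

lemma double_prev_idx:
  "j < n \<Longrightarrow> 0 \<le> c \<Longrightarrow> c \<le> 1 \<Longrightarrow>
     2 * int (prev_idx n j) + c = (2 * int j - 2 + c) mod (2 * int n)"
  by (auto simp: prev_idx_def mod_wrap of_nat_diff)

lemma S_adj_cases:
  assumes "S_adj n x y"
  shows "(pos x = pos y \<and> \<bar>level x - level y\<bar> = 1) \<or>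
    (level x = level y \<and> (\<exists>k\<in>{1, 2}.
       pos y = (pos x + k) mod (2 * int n) \<or> pos x = (pos y + k) mod (2 * int n)))"
proof -
  obtain i where i: "i < n" and cases:
      "(x = A i \<and> y = A (next_idx n i)) \<or> (x = B i \<and> y = B (next_idx n i)) \<or>
      (x = C i \<and> y = C (next_idx n i)) \<or> (x = D i \<and> y = D (next_idx n i)) \<or>
      (x = A (next_idx n i) \<and> y = B i) \<or> (x = A i \<and> y = B i) \<or>
      (x = B i \<and> y = C i) \<or> (x = C i \<and> y = D i) \<or>
      (y = A i \<and> x = A (next_idx n i)) \<or> (y = B i \<and> x = B (next_idx n i)) \<or>
      (y = C i \<and> x = C (next_idx n i)) \<or> (y = D i \<and> x = D (next_idx n i)) \<or>
      (y = A (next_idx n i) \<and> x = B i) \<or> (y = A i \<and> x = B i) \<or>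
      (y = B i \<and> x = C i) \<or> (y = C i \<and> x = D i)"
    using assms unfolding S_adj_iff by blast
  have "2 * int (next_idx n i) = (2 * int i + 2) mod (2 * int n)"
    and "2 * int (next_idx n i) + 1 = (2 * int i + 1 + 2) mod (2 * int n)"
    and "2 * int (next_idx n i) = (2 * int i + 1 + 1) mod (2 * int n)"
    using double_next_idx[OF i, of 0] double_next_idx[OF i, of 1] by (simp_all add: ac_simps)
  moreover have "2 * int i + 1 = (2 * int i + 1) mod (2 * int n)"
    using i by simp
  ultimately show ?thesis using cases by (elim disjE) force+
qed

lemma exists_neighbour_pos_plus_2:
  assumes "index x < n"
  shows "\<exists>y. index y < n \<and> S_adj n y x \<and> level y = level x \<and> pos y = (pos x + 2) mod (2 * int n)"
proof -
  have adj: "S_adj n (A (next_idx n j)) (A j) \<and> S_adj n (B (next_idx n j)) (B j) \<and>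
      S_adj n (C (next_idx n j)) (C j) \<and> S_adj n (D (next_idx n j)) (D j)" if "j < n" for j
    using S_adj_cycles[OF that] by (metis S_adj_commute)
  show ?thesis
    using assms adj[of "index x"] next_idx_less[of "index x" n]
      double_next_idx[of "index x" n 0] double_next_idx[of "index x" n 1]
    by (cases x) (force simp: ac_simps)+
qed

lemma exists_neighbour_pos_minus_2:
  assumes "index x < n"
  shows "\<exists>y. index y < n \<and> S_adj n y x \<and> level y = level x \<and> pos y = (pos x - 2) mod (2 * int n)"
proof -
  have adj: "S_adj n (A (prev_idx n j)) (A j) \<and> S_adj n (B (prev_idx n j)) (B j) \<and>
      S_adj n (C (prev_idx n j)) (C j) \<and> S_adj n (D (prev_idx n j)) (D j)" if "j < n" for j
    using S_adj_cycles[OF prev_idx_less[OF that]] next_idx_prev_idx[OF that] by simp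
  show ?thesis
    using assms adj[of "index x"] prev_idx_less[of "index x" n]
      double_prev_idx[of "index x" n 0] double_prev_idx[of "index x" n 1]
    by (cases x) (force simp: algebra_simps)+
qed

lemma exists_rim_neighbour:
  assumes "index x < n" "level x = 0"
    and "p = (pos x + 1) mod (2 * int n) \<or> p = (pos x - 1) mod (2 * int n)"
  shows "\<exists>y. index y < n \<and> S_adj n y x \<and> level y = 0 \<and> pos y = p"
proof (cases x)
  case (A j)
  then have j: "j < n" using assms(1) by simp
  have "S_adj n (B j) (A j)" "S_adj n (B (prev_idx n j)) (A j)"
    using S_adj_spokes[OF j] S_adj_spokes[OF prev_idx_less[OF j]] next_idx_prev_idx[OF j]
    by (metis S_adj_commute)+
  moreover have "(pos x + 1) mod (2 * int n) = pos (B j)"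
    and "(pos x - 1) mod (2 * int n) = pos (B (prev_idx n j))"
    using A j double_prev_idx[OF j, of 1] by simp_all
  ultimately show ?thesis using assms(3) j prev_idx_less[OF j] A by force
next
  case (B j)
  then have j: "j < n" using assms(1) by simp
  have "(pos x + 1) mod (2 * int n) = pos (A (next_idx n j))"
    and "(pos x - 1) mod (2 * int n) = pos (A j)"
    using B j double_next_idx[OF j, of 0] by (simp_all add: ac_simps)
  then show ?thesis using assms(3) j next_idx_less[OF j] S_adj_spokes[OF j] B by force
qed (use assms in auto)

lemma exists_neighbour_below:
  assumes "index x < n" "level x \<noteq> 0"
  shows "\<exists>y. index y < n \<and> S_adj n y x \<and> level y = level x - 1 \<and> pos y = pos x"
  using assms S_adj_spokes[of "index x" n] by (cases x) force+

lemma exists_neighbour_toward_level: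
  assumes "index x < n" "pos u = pos x" "level u \<noteq> level x"
  shows "\<exists>y. index y < n \<and> S_adj n y x \<and> pos y = pos x \<and>
    \<bar>level u - level y\<bar> + 1 = \<bar>level u - level x\<bar>"
proof (cases x)
  case (A j)
  then show ?thesis using assms by (cases u) (auto, presburger+)
next
  case (B j)
  then have "S_adj n (C j) (B j)"
    using assms(1) S_adj_spokes[of j n] by (metis S_adj_commute index.simps(2))
  then show ?thesis using assms B by (intro exI[of _ "C j"]) (cases u; auto)
next
  case (C j)
  then have "S_adj n (B j) (C j)" "S_adj n (D j) (C j)"
    using assms(1) S_adj_spokes[of j n] by (metis S_adj_commute index.simps(3))+
  then show ?thesis using assms C by (cases u) (auto intro: exI[of _ "B j"] exI[of _ "D j"])
next
  case (D j)
  then show ?thesis using assms S_adj_spokes[of j n] by (intro exI[of _ "C j"]) (cases u; auto)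
qed

section \<open>The distance formula\<close>

definition rim_dist :: "nat \<Rightarrow> int \<Rightarrow> int \<Rightarrow> int" where
  "rim_dist n p q = (cyc_dist (2 * int n) (p - q) + 1) div 2"

definition S_dist :: "nat \<Rightarrow> vtx \<Rightarrow> vtx \<Rightarrow> int" where
  "S_dist n u v = rim_dist n (pos u) (pos v) + \<bar>level u - level v\<bar>"

lemma S_dist_nonneg:
  assumes "index u < n" "index x < n"
  shows "0 \<le> S_dist n u x"
proof -
  have "0 \<le> cyc_dist (2 * int n) (pos u - pos x)"
    using pos_range[of u n] pos_range[of x n] assms by (intro cyc_dist_nonneg) auto
  then show ?thesis unfolding S_dist_def rim_dist_def by simp
qed

lemma S_dist_eq_0_iff:
  assumes "index u < n" "index x < n"
  shows "S_dist n u x = 0 \<longleftrightarrow> x = u"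
proof -
  have range: "\<bar>pos u - pos x\<bar> < 2 * int n"
    using pos_range[of u n] pos_range[of x n] assms by auto
  then have "0 \<le> cyc_dist (2 * int n) (pos u - pos x)" by (rule cyc_dist_nonneg)
  then have "S_dist n u x = 0 \<longleftrightarrow> cyc_dist (2 * int n) (pos u - pos x) = 0 \<and> level u = level x"
    unfolding S_dist_def rim_dist_def by auto
  also have "\<dots> \<longleftrightarrow> pos u = pos x \<and> level u = level x"
    using cyc_dist_eq_0_iff[OF range] by simp
  also have "\<dots> \<longleftrightarrow> x = u"
    using pos_level_inject[of x u] by auto
  finally show ?thesis .
qed

lemma S_dist_adj_le:
  assumes "index u < n" "index x < n" "index y < n" "S_adj n x y"
  shows "S_dist n u y \<le> S_dist n u x + 1"
  using S_adj_cases[OF assms(4)]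
proof
  assume "pos x = pos y \<and> \<bar>level x - level y\<bar> = 1"
  then show ?thesis unfolding S_dist_def by auto
next
  assume "level x = level y \<and> (\<exists>k\<in>{1, 2}.
       pos y = (pos x + k) mod (2 * int n) \<or> pos x = (pos y + k) mod (2 * int n))"
  then obtain k where same_level: "level x = level y" and k: "k \<in> {1, 2}"
    and shift: "pos y = (pos x + k) mod (2 * int n) \<or> pos x = (pos y + k) mod (2 * int n)"
    by auto
  have "cyc_dist (2 * int n) (pos u - pos y) \<le> cyc_dist (2 * int n) (pos u - pos x) + 2"
    using pos_range[OF assms(1)] pos_range[OF assms(2)] pos_range[OF assms(3)] assms(2) k shift
    by (intro cyc_dist_le_mod_shift) auto
  then show ?thesis using same_level unfolding S_dist_def rim_dist_def by linarith
qed

lemma S_dist_descent_far: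
  assumes u: "index u < n" and x: "index x < n"
    and far: "2 \<le> cyc_dist (2 * int n) (pos u - pos x)"
  shows "\<exists>y. index y < n \<and> S_adj n y x \<and> S_dist n u y + 1 = S_dist n u x"
proof -
  define c where "c = cyc_dist (2 * int n) (pos u - pos x)"
  have ranges: "0 \<le> pos u" "pos u < 2 * int n" "0 \<le> pos x" "pos x < 2 * int n"
    using pos_range u x by blast+
  obtain y where y: "index y < n" "S_adj n y x" "level y = level x"
    and closer: "cyc_dist (2 * int n) (pos u - pos y) = c - 2"
    using cyc_dist_toward[OF ranges far, folded c_def]
  proof (elim disjE)
    assume "cyc_dist (2 * int n) (pos u - (pos x + 2) mod (2 * int n)) = c - 2"
    with exists_neighbour_pos_plus_2[OF x] show thesis using that by force
  next
    assume "cyc_dist (2 * int n) (pos u - (pos x - 2) mod (2 * int n)) = c - 2"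
    with exists_neighbour_pos_minus_2[OF x] show thesis using that by force
  qed
  have "(c - 1) div 2 + 1 = (c + 1) div 2" by presburger
  then have "S_dist n u y + 1 = S_dist n u x"
    using y(3) closer unfolding S_dist_def rim_dist_def c_def by simp
  then show ?thesis using y by blast
qed

lemma S_dist_descent_vertical:
  assumes x: "index x < n" and same_pos: "pos u = pos x" and "level u \<noteq> level x"
  shows "\<exists>y. index y < n \<and> S_adj n y x \<and> S_dist n u y + 1 = S_dist n u x"
proof -
  obtain y where y: "index y < n" "S_adj n y x" "pos y = pos x"
    and "\<bar>level u - level y\<bar> + 1 = \<bar>level u - level x\<bar>"
    using exists_neighbour_toward_level[OF assms] by blast
  then have "S_dist n u y + 1 = S_dist n u x" using same_pos unfolding S_dist_def by simp
  then show ?thesis using y by blast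
qed

lemma S_dist_descent_near:
  assumes u: "index u < n" and x: "index x < n"
    and near: "cyc_dist (2 * int n) (pos u - pos x) = 1"
  shows "\<exists>y. index y < n \<and> S_adj n y x \<and> S_dist n u y + 1 = S_dist n u x"
proof -
  have ranges: "0 \<le> pos u" "pos u < 2 * int n" "0 \<le> pos x" "pos x < 2 * int n"
    using pos_range u x by blast+
  have dist_x: "S_dist n u x = 1 + \<bar>level u - level x\<bar>"
    using near unfolding S_dist_def rim_dist_def by simp
  show ?thesis
  proof (cases "level x = 0")
    case True
    obtain y where y: "index y < n" "S_adj n y x" "level y = 0" "pos y = pos u"
      using exists_rim_neighbour[OF x True cyc_dist_eq_1D[OF ranges near]] by blast
    then have "S_dist n u y = \<bar>level u\<bar>" unfolding S_dist_def rim_dist_def cyc_dist_def by simp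
    then show ?thesis using y dist_x True by auto
  next
    case False
    have "even (pos u)"
    proof (rule ccontr)
      assume "odd (pos u)"
      then have "even (pos u - pos x)" using odd_pos_if_level_ne_0[OF False] by simp
      then obtain k where "pos u - pos x = 2 * k" by (elim evenE)
      then show False using near cyc_dist_even_ne_1 by metis
    qed
    then have level_u: "level u = 0" by (rule level_eq_0_if_even_pos)
    obtain y where y: "index y < n" "S_adj n y x" "level y = level x - 1" "pos y = pos x"
      using exists_neighbour_below[OF x False] by blast
    have "0 < level x" using False level_nonneg[of x] by simp
    then have "S_dist n u y + 1 = S_dist n u x"
      using y level_u dist_x near unfolding S_dist_def rim_dist_def by simp
    then show ?thesis using y by blast
  qed
qed

lemma S_dist_descent:
  assumes u: "index u < n" and x: "index x < n" and "0 < S_dist n u x"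
  shows "\<exists>y. index y < n \<and> S_adj n y x \<and> S_dist n u y + 1 = S_dist n u x"
proof -
  have "\<bar>pos u - pos x\<bar> < 2 * int n" using pos_range[OF u] pos_range[OF x] by auto
  then have "0 \<le> cyc_dist (2 * int n) (pos u - pos x)" by (rule cyc_dist_nonneg)
  then consider "2 \<le> cyc_dist (2 * int n) (pos u - pos x)"
    | "cyc_dist (2 * int n) (pos u - pos x) = 1" | "cyc_dist (2 * int n) (pos u - pos x) = 0"
    by linarith
  then show ?thesis
  proof cases
    case 1
    then show ?thesis using S_dist_descent_far[OF u x] by blast
  next
    case 2
    then show ?thesis using S_dist_descent_near[OF u x] by blast
  next
    case 3
    then have "pos u = pos x" using cyc_dist_eq_0_iff[OF \<open>\<bar>pos u - pos x\<bar> < 2 * int n\<close>] by simp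
    moreover have "level u \<noteq> level x"
      using assms(3) pos_level_inject[of u x] calculation S_dist_eq_0_iff[OF u x] by auto
    ultimately show ?thesis using S_dist_descent_vertical[OF x] by blast
  qed
qed

lemma gdist_S:
  assumes u: "index u < n" and v: "index v < n"
  shows "gdist (S_vertices n) (S_adj n) u v = nat (S_dist n u v)"
proof (rule gdist_eq_potential)
  show "u \<in> S_vertices n" "v \<in> S_vertices n" using u v by (simp_all add: mem_S_vertices_iff)
  show "nat (S_dist n u y) \<le> nat (S_dist n u x) + 1"
    if "x \<in> S_vertices n" "y \<in> S_vertices n" "S_adj n x y" for x y
  proof -
    have "S_dist n u y \<le> S_dist n u x + 1" "0 \<le> S_dist n u x"
      using that S_dist_adj_le[OF u] S_dist_nonneg[OF u] by (simp_all add: mem_S_vertices_iff)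
    then show ?thesis by (simp add: nat_le_iff)
  qed
  show "nat (S_dist n u u) = 0" using S_dist_eq_0_iff[OF u u] by simp
  show "x = u" if "x \<in> S_vertices n" "nat (S_dist n u x) = 0" for x
  proof -
    have x: "index x < n" using that(1) by (simp add: mem_S_vertices_iff)
    then have "S_dist n u x = 0" using that(2) S_dist_nonneg[OF u x] by simp
    then show ?thesis using S_dist_eq_0_iff[OF u x] by simp
  qed
  show "\<exists>y\<in>S_vertices n. S_adj n y x \<and> nat (S_dist n u y) + 1 = nat (S_dist n u x)"
    if x: "x \<in> S_vertices n" and positive: "0 < nat (S_dist n u x)" for x
  proof -
    obtain y where "index y < n" "S_adj n y x" "S_dist n u y + 1 = S_dist n u x"
      using S_dist_descent[OF u] x positive by (auto simp: mem_S_vertices_iff)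
    then show ?thesis
      using S_dist_nonneg[OF u, of y] by (intro bexI[of _ y]) (auto simp: mem_S_vertices_iff)
  qed
qed

section \<open>Resolving adjacent vertices\<close>

lemma resolves_S_iff:
  assumes "index x < n" "index y < n" "index w < n"
  shows "resolves (S_vertices n) (S_adj n) w x y \<longleftrightarrow> S_dist n x w \<noteq> S_dist n y w"
  using assms gdist_S[of x n w] gdist_S[of y n w] S_dist_nonneg[of x n w] S_dist_nonneg[of y n w]
  unfolding resolves_def by (simp add: eq_nat_nat_iff)

lemma rim_dist_translate:
  assumes "0 \<le> q" "q < 2 * int n" "0 \<le> p" "p < 2 * int n"
  shows "rim_dist n q p = rim_dist n ((q - p) mod (2 * int n)) 0"
proof (cases "p \<le> q")
  case True
  then show ?thesis using assms unfolding rim_dist_def by simp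
next
  case False
  then have "(q - p) mod (2 * int n) = q - p + 2 * int n" using assms by (simp add: mod_wrap)
  moreover have "cyc_dist (2 * int n) (q - p + 2 * int n) = cyc_dist (2 * int n) (q - p)"
    using False assms unfolding cyc_dist_def by (simp add: abs_if min_def)
  ultimately show ?thesis unfolding rim_dist_def by simp
qed

text \<open>The offsets r = q - pos w (mod 2n) at which a vertex w does not resolve the rim positions
  q and q + k, for k = 1, 2 (see rim_pair_unresolved_iff).\<close>
definition blind_offset :: "nat \<Rightarrow> int \<Rightarrow> int \<Rightarrow> bool" where
  "blind_offset n k r \<longleftrightarrow>
     (if k = 1 then (odd r \<and> r < int n) \<or> (even r \<and> int n \<le> r)
      else r = int n - 1 \<or> r = 2 * int n - 1)"

lemma rim_pair_unresolved_iff: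
  assumes q: "0 \<le> q" "q < 2 * int n" and p: "0 \<le> p" "p < 2 * int n"
    and k: "k \<in> {1, 2}" and "2 \<le> n"
  shows "rim_dist n q p = rim_dist n ((q + k) mod (2 * int n)) p \<longleftrightarrow>
    blind_offset n k ((q - p) mod (2 * int n))"
proof -
  define r where "r = (q - p) mod (2 * int n)"
  have r: "0 \<le> r" "r < 2 * int n" unfolding r_def using q by simp_all
  have "0 \<le> (q + k) mod (2 * int n)" "(q + k) mod (2 * int n) < 2 * int n" using q by simp_all
  then have "rim_dist n ((q + k) mod (2 * int n)) p =
      rim_dist n (((q + k) mod (2 * int n) - p) mod (2 * int n)) 0"
    using p by (rule rim_dist_translate)
  also have "((q + k) mod (2 * int n) - p) mod (2 * int n) = (r + k) mod (2 * int n)"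
    unfolding r_def by (simp add: mod_simps algebra_simps)
  finally have "rim_dist n q p = rim_dist n ((q + k) mod (2 * int n)) p \<longleftrightarrow>
      rim_dist n r 0 = rim_dist n ((r + k) mod (2 * int n)) 0"
    using rim_dist_translate[OF q p] unfolding r_def by simp
  then show ?thesis
    using k ceil_half_cyc_dist_succ_iff[OF r] ceil_half_cyc_dist_add_2_iff[OF r] \<open>2 \<le> n\<close>
    unfolding r_def rim_dist_def blind_offset_def by auto
qed

definition rim_vertex :: "int \<Rightarrow> vtx" where
  "rim_vertex q = (if even q then A (nat (q div 2)) else B (nat (q div 2)))"

lemma rim_vertex_props:
  assumes "0 \<le> q" "q < 2 * int n"
  shows "index (rim_vertex q) < n \<and> level (rim_vertex q) = 0 \<and> pos (rim_vertex q) = q"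
  using assms unfolding rim_vertex_def by auto

lemma S_adj_rim_vertex:
  assumes "0 \<le> q" "q < 2 * int n" "k \<in> {1, 2}"
  shows "S_adj n (rim_vertex q) (rim_vertex ((q + k) mod (2 * int n)))"
proof -
  define m where "m = nat (q div 2)"
  have m: "m < n" using assms unfolding m_def by linarith
  have next_pos: "(2 * int m + 2) mod (2 * int n) = 2 * int (next_idx n m)"
    using double_next_idx[OF m, of 0] by simp
  have rim_A: "rim_vertex (2 * int m) = A m" and rim_B: "rim_vertex (2 * int m + 1) = B m"
    and rim_next: "rim_vertex (2 * int (next_idx n m)) = A (next_idx n m)"
    by (simp_all add: rim_vertex_def)
  consider "q = 2 * int m" | "q = 2 * int m + 1" using assms unfolding m_def by linarith
  then show ?thesis
  proof cases
    case 1
    have "(2 * int m + 1) mod (2 * int n) = 2 * int m + 1" using m by simp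
    then show ?thesis
      using assms(3) 1 next_pos rim_A rim_B rim_next S_adj_spokes[OF m] S_adj_cycles[OF m] by auto
  next
    case 2
    have "(2 * int m + 1 + 2) mod (2 * int n) = 2 * int (next_idx n m) + 1"
      using double_next_idx[OF m, of 1] by (simp add: ac_simps)
    moreover have "rim_vertex (2 * int (next_idx n m) + 1) = B (next_idx n m)"
      by (simp add: rim_vertex_def)
    ultimately show ?thesis
      using assms(3) 2 next_pos rim_B rim_next S_adj_spokes[OF m] S_adj_cycles[OF m]
      by (auto simp: ac_simps S_adj_commute)
  qed
qed

lemma S_local_resolving_setI:
  assumes "2 \<le> n" and W: "\<forall>w\<in>W. index w < n"
    and sees: "\<And>q k. 0 \<le> q \<Longrightarrow> q < 2 * int n \<Longrightarrow> k \<in> {1, 2} \<Longrightarrow>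
      \<exists>w\<in>W. \<not> blind_offset n k ((q - pos w) mod (2 * int n))"
  shows "local_resolving_set (S_vertices n) (S_adj n) W"
  unfolding local_resolving_set_def
proof (intro conjI ballI impI)
  show "W \<subseteq> S_vertices n" using W by (auto simp: mem_S_vertices_iff)
  fix x y assume "x \<in> S_vertices n" "y \<in> S_vertices n" and adj: "S_adj n x y"
  then have x: "index x < n" and y: "index y < n" by (simp_all add: mem_S_vertices_iff)
  have rim_pair: "\<exists>w\<in>W. S_dist n a w \<noteq> S_dist n b w"
    if a: "index a < n" and "level a = level b" and k: "k \<in> {1, 2}"
      and b: "pos b = (pos a + k) mod (2 * int n)" for a b k
  proof -
    have ra: "0 \<le> pos a" "pos a < 2 * int n" using pos_range[OF a] by auto
    obtain w where w: "w \<in> W" "\<not> blind_offset n k ((pos a - pos w) mod (2 * int n))"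
      using sees[OF ra k] by blast
    have "0 \<le> pos w" "pos w < 2 * int n" using pos_range W w(1) by blast+
    then have "rim_dist n (pos a) (pos w) \<noteq> rim_dist n (pos b) (pos w)"
      using rim_pair_unresolved_iff[OF ra _ _ k \<open>2 \<le> n\<close>] w(2) b by simp
    then show ?thesis using w(1) \<open>level a = level b\<close> unfolding S_dist_def by auto
  qed
  have "\<exists>w\<in>W. S_dist n x w \<noteq> S_dist n y w"
    using S_adj_cases[OF adj]
  proof (elim disjE conjE bexE)
    assume "pos x = pos y" "\<bar>level x - level y\<bar> = 1"
    obtain w where "w \<in> W" using sees[of 0 1] \<open>2 \<le> n\<close> by auto
    moreover have "\<bar>level x - level w\<bar> \<noteq> \<bar>level y - level w\<bar>"
      using \<open>\<bar>level x - level y\<bar> = 1\<close> by arith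
    ultimately show ?thesis using \<open>pos x = pos y\<close> unfolding S_dist_def by auto
  next
    fix k assume "level x = level y" "k \<in> {1, 2}" "pos y = (pos x + k) mod (2 * int n)"
    then show ?thesis using rim_pair[OF x] by blast
  next
    fix k assume "level x = level y" "k \<in> {1, 2}" "pos x = (pos y + k) mod (2 * int n)"
    then show ?thesis using rim_pair[OF y, of x k] by (metis (mono_tags))
  qed
  then show "\<exists>w\<in>W. resolves (S_vertices n) (S_adj n) w x y"
    using resolves_S_iff[OF x y] W by blast
qed

lemma S_not_local_resolving_set:
  assumes "2 \<le> n" and k: "k \<in> {1, 2}"
    and blind: "\<forall>w\<in>W. index w < n \<and> blind_offset n k ((q - pos w) mod (2 * int n))"
  shows "\<not> local_resolving_set (S_vertices n) (S_adj n) W"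
proof
  assume lrs: "local_resolving_set (S_vertices n) (S_adj n) W"
  define q0 where "q0 = q mod (2 * int n)"
  define q1 where "q1 = (q0 + k) mod (2 * int n)"
  have q0: "0 \<le> q0" "q0 < 2 * int n" and q1: "0 \<le> q1" "q1 < 2 * int n"
    using assms(1) unfolding q0_def q1_def by simp_all
  define x where "x = rim_vertex q0"
  define y where "y = rim_vertex q1"
  have x: "index x < n" "level x = 0" "pos x = q0"
    using rim_vertex_props[OF q0] unfolding x_def by auto
  have y: "index y < n" "level y = 0" "pos y = q1"
    using rim_vertex_props[OF q1] unfolding y_def by auto
  have "S_adj n x y" using S_adj_rim_vertex[OF q0 k] unfolding x_def y_def q1_def .
  moreover have "x \<in> S_vertices n" "y \<in> S_vertices n"
    using x(1) y(1) by (simp_all add: mem_S_vertices_iff)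
  ultimately obtain w where w: "w \<in> W" "resolves (S_vertices n) (S_adj n) w x y"
    using lrs unfolding local_resolving_set_def by blast
  have "(q0 - pos w) mod (2 * int n) = (q - pos w) mod (2 * int n)"
    unfolding q0_def by (simp add: mod_simps)
  then have "blind_offset n k ((q0 - pos w) mod (2 * int n))" using blind w(1) by simp
  moreover have "0 \<le> pos w" "pos w < 2 * int n" using pos_range blind w(1) by blast+
  ultimately have "rim_dist n q0 (pos w) = rim_dist n q1 (pos w)"
    using rim_pair_unresolved_iff[OF q0 _ _ k \<open>2 \<le> n\<close>] unfolding q1_def by simp
  then have "S_dist n x w = S_dist n y w" using x y unfolding S_dist_def by simp
  then show False using w resolves_S_iff[OF x(1) y(1)] blind by blast
qed

lemma no_common_blind_offset_odd:
  assumes "odd n" "2 \<le> n" "0 \<le> q" "q < 2 * int n" "k \<in> {1, 2}"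
  shows "\<not> (blind_offset n k q \<and> blind_offset n k ((q - 1) mod (2 * int n)))"
proof -
  have "(q - 1) mod (2 * int n) = (if q = 0 then 2 * int n - 1 else q - 1)"
    using assms by (simp add: mod_wrap)
  moreover have "even q \<Longrightarrow> q \<noteq> int n" using assms(1) by auto
  ultimately show ?thesis using assms unfolding blind_offset_def by auto
qed

lemma no_common_blind_offset_even:
  assumes "even n" "2 \<le> n" "0 \<le> q" "q < 2 * int n" "k \<in> {1, 2}"
  shows "\<not> (blind_offset n k q \<and> blind_offset n k ((q - 1) mod (2 * int n)) \<and>
    blind_offset n k ((q - 2) mod (2 * int n)))"
proof -
  have "(q - 1) mod (2 * int n) = (if q = 0 then 2 * int n - 1 else q - 1)"
    and "(q - 2) mod (2 * int n) = (if q < 2 then 2 * int n + q - 2 else q - 2)"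
    using assms by (simp_all add: mod_wrap)
  then show ?thesis using assms unfolding blind_offset_def by simp
qed

lemma common_blind_offset_even:
  assumes "even n" "0 \<le> t" "t < 2 * int n"
  shows "\<exists>k\<in>{1, 2}. \<exists>r. 0 \<le> r \<and> r < 2 * int n \<and>
    blind_offset n k r \<and> blind_offset n k ((r - t) mod (2 * int n))"
proof -
  have n_minus_1: "blind_offset n 1 (int n - 1)" and n: "blind_offset n 1 (int n)"
    using assms unfolding blind_offset_def by auto
  consider "t = int n" | "even t" "t < int n" | "even t" "int n < t" | "odd t" "t < int n"
    | "odd t" "int n < t"
    by linarith
  then show ?thesis
  proof cases
    case 1
    then have "(int n - 1 - t) mod (2 * int n) = 2 * int n - 1" using assms by (simp add: mod_wrap)
    then show ?thesis using 1 assms unfolding blind_offset_def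
      by (intro bexI[of _ 2] exI[of _ "int n - 1"]) auto
  next
    case 2
    then have "(int n - 1 - t) mod (2 * int n) = int n - 1 - t" using assms by simp
    moreover have "blind_offset n 1 (int n - 1 - t)"
      using 2 assms unfolding blind_offset_def by presburger
    ultimately show ?thesis
      using n_minus_1 2 assms by (intro bexI[of _ 1] exI[of _ "int n - 1"]) auto
  next
    case 3
    then have "(int n - t) mod (2 * int n) = 3 * int n - t" using assms by (simp add: mod_wrap)
    moreover have "blind_offset n 1 (3 * int n - t)"
      using 3 assms unfolding blind_offset_def by presburger
    ultimately show ?thesis using n 3 assms by (intro bexI[of _ 1] exI[of _ "int n"]) auto
  next
    case 4
    then have "(int n - t) mod (2 * int n) = int n - t" using assms by simp
    moreover have "blind_offset n 1 (int n - t)"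
      using 4 assms unfolding blind_offset_def by presburger
    ultimately show ?thesis using n 4 assms by (intro bexI[of _ 1] exI[of _ "int n"]) auto
  next
    case 5
    then have "(int n - 1 - t) mod (2 * int n) = 3 * int n - 1 - t"
      using assms by (simp add: mod_wrap)
    moreover have "blind_offset n 1 (3 * int n - 1 - t)"
      using 5 assms unfolding blind_offset_def by presburger
    ultimately show ?thesis
      using n_minus_1 5 assms by (intro bexI[of _ 1] exI[of _ "int n - 1"]) auto
  qed
qed

lemma subset_singleton_if_card_le_1:
  assumes "finite W" "card W \<le> 1"
  shows "\<exists>w. W \<subseteq> {w}"
proof (cases "W = {}")
  case False
  then obtain w where "w \<in> W" by blast
  then have "W \<subseteq> {w}" using assms card_le_Suc0_iff_eq[of W] by auto
  then show ?thesis ..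
qed simp

lemma subset_doubleton_if_card_le_2:
  assumes "finite W" "card W \<le> 2"
  shows "\<exists>a b. W \<subseteq> {a, b}"
proof (cases "W = {}")
  case False
  then obtain a where "a \<in> W" by blast
  then have "card (W - {a}) \<le> 1" using assms by (simp add: card_Diff_singleton)
  then obtain b where "W - {a} \<subseteq> {b}" using subset_singleton_if_card_le_1 assms(1) by blast
  then show ?thesis by blast
qed simp

lemma S_local_resolving_set_odd:
  assumes "odd n" "2 \<le> n"
  shows "local_resolving_set (S_vertices n) (S_adj n) {A 0, B 0}"
proof (rule S_local_resolving_setI)
  fix q k :: int assume "0 \<le> q" "q < 2 * int n" "k \<in> {1, 2}"
  then show "\<exists>w\<in>{A 0, B 0}. \<not> blind_offset n k ((q - pos w) mod (2 * int n))"
    using no_common_blind_offset_odd[OF assms] by auto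
qed (use assms in auto)

lemma S_local_resolving_set_even:
  assumes "even n" "2 \<le> n"
  shows "local_resolving_set (S_vertices n) (S_adj n) {A 0, A 1, B 0}"
proof (rule S_local_resolving_setI)
  fix q k :: int assume "0 \<le> q" "q < 2 * int n" "k \<in> {1, 2}"
  then show "\<exists>w\<in>{A 0, A 1, B 0}. \<not> blind_offset n k ((q - pos w) mod (2 * int n))"
    using no_common_blind_offset_even[OF assms] by auto
qed (use assms in auto)

lemma S_local_resolving_set_card_ge_2:
  assumes "2 \<le> n" and lrs: "local_resolving_set (S_vertices n) (S_adj n) W" and "finite W"
  shows "2 \<le> card W"
proof (rule ccontr)
  assume "\<not> 2 \<le> card W"
  then have "card W \<le> 1" by simp
  then obtain w where W: "W \<subseteq> {w}" using subset_singleton_if_card_le_1[OF \<open>finite W\<close>] by blast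
  have "index w' < n \<and> blind_offset n 2 ((pos w + int n - 1 - pos w') mod (2 * int n))"
    if "w' \<in> W" for w'
    using that W lrs assms(1) unfolding local_resolving_set_def blind_offset_def
    by (auto simp: mem_S_vertices_iff)
  then show False using S_not_local_resolving_set[OF assms(1), of 2 W] lrs by auto
qed

lemma S_local_resolving_set_card_ge_3:
  assumes "even n" "2 \<le> n" and lrs: "local_resolving_set (S_vertices n) (S_adj n) W" and "finite W"
  shows "3 \<le> card W"
proof (rule ccontr)
  assume "\<not> 3 \<le> card W"
  then have "card W \<le> 2" by simp
  then obtain w1 w2 where W: "W \<subseteq> {w1, w2}"
    using subset_doubleton_if_card_le_2[OF \<open>finite W\<close>] by blast
  define t where "t = (pos w2 - pos w1) mod (2 * int n)"
  have "0 \<le> t" "t < 2 * int n" using assms(2) unfolding t_def by simp_all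
  then obtain k r where k: "k \<in> {1, 2}" and r: "0 \<le> r" "r < 2 * int n"
    and blind: "blind_offset n k r" "blind_offset n k ((r - t) mod (2 * int n))"
    using common_blind_offset_even[OF assms(1)] by blast
  have "(pos w1 + r - pos w1) mod (2 * int n) = r" using r by simp
  then have blind_w1: "blind_offset n k ((pos w1 + r - pos w1) mod (2 * int n))"
    using blind(1) by simp
  have "(pos w1 + r - pos w2) mod (2 * int n) = (r - t) mod (2 * int n)"
    unfolding t_def by (simp add: mod_simps algebra_simps)
  then have blind_w2: "blind_offset n k ((pos w1 + r - pos w2) mod (2 * int n))"
    using blind(2) by simp
  have W_vertices: "W \<subseteq> S_vertices n" using lrs unfolding local_resolving_set_def by blast
  have "index w < n \<and> blind_offset n k ((pos w1 + r - pos w) mod (2 * int n))" if "w \<in> W" for w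
  proof -
    have "w = w1 \<or> w = w2" using that W by blast
    then show ?thesis using that W_vertices blind_w1 blind_w2 by (auto simp: mem_S_vertices_iff)
  qed
  then show False using S_not_local_resolving_set[OF assms(2) k] lrs by blast
qed

theorem theorem3p1:
  fixes n :: nat
  assumes "n \<ge> 3"
  shows "lmd (S_vertices n) (S_adj n) = (if odd n then 2 else 3)"
proof -
  have n: "2 \<le> n" using assms by simp
  show ?thesis
  proof (cases "odd n")
    case True
    then show ?thesis
      using lmd_eqI[OF S_local_resolving_set_odd[OF True n] _ _
          S_local_resolving_set_card_ge_2[OF n]]
      by simp
  next
    case False
    then have "even n" by simp
    then show ?thesis
      using lmd_eqI[OF S_local_resolving_set_even[OF _ n] _ _
          S_local_resolving_set_card_ge_3[OF _ n]]
      by simp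
  qed
qed

end
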